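(* Let $p$ be a prime with $p\equiv\pm3\pmod 8$, $q=p^s$, let $m$ be an integer with $2^m\mid(q-1)$ and $m\ge 3$ if $p\equiv 3\pmod 8$, $m\ge 2$ if $p\equiv -3\pmod 8$, let $\lambda$ be a multiplicative character of order $2^m$ on $\mathbb F_q$, and let $n\ge1$. For $1\le r\le m$, $0\le t\le m$ and odd $c_0$ put $$W_{r,t}(c_0)=\sum_{\substack{j_0=1\\ 2\nmid j_0}}^{2^r-1}G(\lambda^{2^{m-r}j_0})\,\zeta_{2^{m-t}}^{2^{m-r}c_0j_0},\qquad S_t=\sum_{\substack{c_0=1\\2\nmid c_0}}^{2^{m-t}}\Bigl(\sum_{j=1}^{2^m-1} G(\lambda^j)\zeta_{2^{m-t}}^{c_0j}\Bigr)^n.$$ Then $$S_{m-1}+S_m=\Bigl(\sum_{r=1}^{m-1} W_{r,m}(1)+W_{m,m}(1)\Bigr)^n+\Bigl(\sum_{r=1}^{m-1} W_{r,m}(1)-W_{m,m}(1)\Bigr)^n.$$ If $p\equiv 3\pmod{8}$, then $S_{m-2}=2\cdot\bigl(\sum_{r=1}^{m-1} W_{r,m-2}(1)\bigr)^n$, and for $0\le t\le m-3$, $$S_t=2^{m-t-2}\Bigl[\Bigl(\sum_{r=1}^{t+1} W_{r,t}(1)+W_{t+3,t}(1)\Bigr)^n+\Bigl(\sum_{r=1}^{t+1} W_{r,t}(1)-W_{t+3,t}(1)\Bigr)^n\Bigr].$$ If $p\equiv -3\pmod{8}$ and $0\le t\le m-2$, then $$S_t=2^{m-t-2}\Bigl[\Bigl(\sum_{r=1}^{t+1}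 W_{r,t}(1)+W_{t+2,t}(1)\Bigr)^n+\Bigl(\sum_{r=1}^{t+1} W_{r,t}(1)-W_{t+2,t}(1)\Bigr)^n\Bigr].$$
   Context: Multiplicative characters are extended by $\psi(0)=0$; $\zeta_k=e^{2\pi i/k}$. The Gauss sum of a nontrivial character $\psi$ on $\mathbb F_q$ is $G(\psi)=\sum_{x\in\mathbb F_q}\psi(x)\zeta_p^{\mathrm{Tr}(x)}$, with $\mathrm{Tr}$ the trace from $\mathbb F_q$ to $\mathbb F_p$. *)

theory Defs
  imports "HOL-Analysis.Analysis"
begin

definition zeta :: "nat \<Rightarrow> complex" where
  "zeta k = exp (2 * pi * \<i> / of_nat k)"

definition trace_Fq :: "nat \<Rightarrow> nat \<Rightarrow> 'a::{field,finite} \<Rightarrow> 'a" where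
  "trace_Fq p s x = (\<Sum>i<s. x ^ (p ^ i))"

definition trace_nat :: "nat \<Rightarrow> nat \<Rightarrow> 'a::{field,finite} \<Rightarrow> nat" where
  "trace_nat p s x = (THE k. k < p \<and> of_nat k = trace_Fq p s x)"

definition mult_char :: "('a::{field,finite} \<Rightarrow> complex) \<Rightarrow> bool" where
  "mult_char \<psi> \<longleftrightarrow> \<psi> 0 = 0 \<and> (\<forall>x. x \<noteq> 0 \<longrightarrow> \<psi> x \<noteq> 0)
     \<and> (\<forall>x y. \<psi> (x * y) = \<psi> x * \<psi> y)"

definition char_order :: "('a::{field,finite} \<Rightarrow> complex) \<Rightarrow> nat" where
  "char_order \<psi> = (LEAST k. 0 < k \<and> (\<forall>x. x \<noteq> 0 \<longrightarrow> \<psi> x ^ k = 1))"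

text \<open>Power of a character (for j \<ge> 1 this respects the convention psi 0 = 0).\<close>
definition char_pow :: "('a::{field,finite} \<Rightarrow> complex) \<Rightarrow> nat \<Rightarrow> 'a \<Rightarrow> complex" where
  "char_pow \<psi> j = (\<lambda>x. \<psi> x ^ j)"

definition gauss_sum :: "nat \<Rightarrow> nat \<Rightarrow> ('a::{field,finite} \<Rightarrow> complex) \<Rightarrow> complex" where
  "gauss_sum p s \<psi> = (\<Sum>x\<in>UNIV. \<psi> x * zeta p ^ trace_nat p s x)"

definition W_sum :: "nat \<Rightarrow> nat \<Rightarrow> ('a::{field,finite} \<Rightarrow> complex) \<Rightarrow> nat \<Rightarrow> nat \<Rightarrow> nat \<Rightarrow> nat \<Rightarrow> complex" where
  "W_sum p s lam m r t c0 =
     (\<Sum>j0\<in>{j. 1 \<le> j \<and> j \<le> 2^r - 1 \<and> odd j}.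
        gauss_sum p s (char_pow lam (2^(m-r) * j0)) * zeta (2^(m-t)) ^ (2^(m-r) * c0 * j0))"

definition S_sum :: "nat \<Rightarrow> nat \<Rightarrow> ('a::{field,finite} \<Rightarrow> complex) \<Rightarrow> nat \<Rightarrow> nat \<Rightarrow> nat \<Rightarrow> complex" where
  "S_sum p s lam m n t =
     (\<Sum>c0\<in>{c. 1 \<le> c \<and> c \<le> 2^(m-t) \<and> odd c}.
        (\<Sum>j=1..2^m-1. gauss_sum p s (char_pow lam j) * zeta (2^(m-t)) ^ (c0 * j)) ^ n)"

end

theory Submission
  imports Defs "HOL-Number_Theory.Cong"
begin

text \<open>
  Write \<open>G j\<close> for the Gauss sum of \<open>\<lambda>\<^sup>j\<close>. Grouping the indices \<open>j\<close> of the inner sum of \<open>S\<^sub>t\<close>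
  by their 2-adic valuation \<open>m - r\<close> splits it into the parts \<open>W\<^sub>r\<^sub>,\<^sub>t(c)\<close>, and
  \<open>W\<^sub>r\<^sub>,\<^sub>t(c)\<close> only depends on \<open>c\<close> modulo \<open>2\<^sup>r\<^sup>-\<^sup>t\<close>; it is independent of \<open>c\<close> for \<open>r \<le> t\<close>,
  and shifting \<open>c\<close> by an odd multiple of \<open>2\<^sup>r\<^sup>-\<^sup>t\<^sup>-\<^sup>1\<close> changes its sign.
  Since \<open>x \<mapsto> x\<^sup>p\<close> permutes \<open>\<bbbF>\<^sub>q\<close> and preserves the trace, \<open>G (p j) = G j\<close>, hence
  \<open>W\<^sub>r\<^sub>,\<^sub>t(p\<^sup>K c) = W\<^sub>r\<^sub>,\<^sub>t(c)\<close>. So \<open>W\<^sub>r\<^sub>,\<^sub>t\<close> vanishes on odd \<open>c\<close> as soon as some \<open>p\<^sup>K\<close> is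
  \<open>1 + 2\<^sup>r\<^sup>-\<^sup>t\<^sup>-\<^sup>1 w\<close> with \<open>w\<close> odd. For \<open>p \<equiv> \<plusminus>3 (mod 8)\<close> the 2-adic valuations of
  \<open>p\<^sup>K - 1\<close> are known exactly, so besides the parts with \<open>r \<le> t + 1\<close> only \<open>W\<^sub>t\<^sub>+\<^sub>3\<^sub>,\<^sub>t\<close>
  (resp. \<open>W\<^sub>t\<^sub>+\<^sub>2\<^sub>,\<^sub>t\<close>) survives, and it takes the values \<open>\<plusminus>W\<^sub>t\<^sub>+\<^sub>3\<^sub>,\<^sub>t(1)\<close> equally often as
  \<open>c\<close> runs over the odd residues; summing \<open>n\<close>-th powers gives the formulas.
\<close>

lemma zeta_pow_self: "zeta N ^ N = 1"
proof -
  have "zeta N ^ N = exp (of_nat N * (2 * pi * \<i> / of_nat N))"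
    unfolding zeta_def by (rule exp_of_nat_mult[symmetric])
  also have "\<dots> = 1"
    by (cases "N = 0") (simp_all add: exp_eq_1)
  finally show ?thesis .
qed

lemma zeta_pow_mod: "zeta N ^ (a mod N) = zeta N ^ a"
proof -
  have "zeta N ^ a = (zeta N ^ N) ^ (a div N) * zeta N ^ (a mod N)"
    by (simp only: power_mult[symmetric] power_add[symmetric] mult_div_mod_eq)
  then show ?thesis by (simp add: zeta_pow_self)
qed

lemma zeta_pow_cong: "a mod N = b mod N \<Longrightarrow> zeta N ^ a = zeta N ^ b"
  by (metis zeta_pow_mod)

lemma zeta_pow_cong_dvd: "M dvd N \<Longrightarrow> a mod N = b mod N \<Longrightarrow> zeta M ^ a = zeta M ^ b"
proof -
  assume "M dvd N" "a mod N = b mod N"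
  then have "a mod M = b mod M" by (metis mod_mod_cancel)
  then show ?thesis by (rule zeta_pow_cong)
qed

lemma zeta_pow_half: "0 < N \<Longrightarrow> zeta (2 * N) ^ N = -1"
proof -
  assume "0 < N"
  have "zeta (2 * N) ^ N = exp (of_nat N * (2 * pi * \<i> / of_nat (2 * N)))"
    unfolding zeta_def by (rule exp_of_nat_mult[symmetric])
  also have "of_nat N * (2 * pi * \<i> / of_nat (2 * N)) = of_real pi * \<i>"
    using \<open>0 < N\<close> by simp
  finally show ?thesis by simp
qed

lemma zeta_pow_add_half_odd:
  "0 < N \<Longrightarrow> odd w \<Longrightarrow> zeta (2 * N) ^ (a + N * w) = - (zeta (2 * N) ^ a)"
  by (simp add: power_add power_mult zeta_pow_half)

lemma card_field_ge_2: "2 \<le> CARD('a::{field,finite})"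
proof -
  have "card {0::'a, 1} \<le> CARD('a)" by (rule card_mono) auto
  thus ?thesis by simp
qed

lemma field_power_card_minus_one:
  fixes x :: "'a::{field,finite}"
  assumes "x \<noteq> 0"
  shows "x ^ (CARD('a) - 1) = 1"
proof -
  let ?U = "UNIV - {0::'a}"
  have inj: "inj_on ((*) x) ?U" using assms by (auto simp: inj_on_def)
  have "(*) x ` ?U = ?U" by (rule endo_inj_surj) (use assms inj in auto)
  then have "prod id ?U = prod ((*) x) ?U"
    using prod.reindex[OF inj, of id] by simp
  also have "\<dots> = x ^ card ?U * prod id ?U" by (simp add: prod.distrib)
  finally have "x ^ card ?U = 1" by simp
  moreover have "card ?U = CARD('a) - 1" by (simp add: card_Diff_singleton)
  ultimately show ?thesis by simp
qed

lemma field_power_card: "(x::'a::{field,finite}) ^ CARD('a) = x"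
proof (cases "x = 0")
  case False
  have "CARD('a) = Suc (CARD('a) - 1)" using card_field_ge_2[where 'a='a] by simp
  then have "x ^ CARD('a) = x * x ^ (CARD('a) - 1)" by (metis power_Suc)
  then show ?thesis by (simp only: field_power_card_minus_one[OF False] mult_1_right)
qed (use card_field_ge_2[where 'a='a] in simp)

lemma mult_char_one: "mult_char \<psi> \<Longrightarrow> \<psi> 1 = 1"
  unfolding mult_char_def by (metis mult_cancel_left2 mult_1 one_neq_zero)

lemma mult_char_power: "mult_char \<psi> \<Longrightarrow> \<psi> (x ^ k) = \<psi> x ^ k"
  by (induction k) (auto simp: mult_char_one mult_char_def)

lemma mult_char_pow_order:
  fixes \<psi> :: "'a::{field,finite} \<Rightarrow> complex"
  assumes "mult_char \<psi>" "x \<noteq> 0"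
  shows "\<psi> x ^ char_order \<psi> = 1"
proof -
  let ?P = "\<lambda>k. 0 < k \<and> (\<forall>x::'a. x \<noteq> 0 \<longrightarrow> \<psi> x ^ k = 1)"
  have "?P (CARD('a) - 1)"
  proof
    show "0 < CARD('a) - 1" using card_field_ge_2[where 'a='a] by simp
    show "\<forall>x::'a. x \<noteq> 0 \<longrightarrow> \<psi> x ^ (CARD('a) - 1) = 1"
      by (metis field_power_card_minus_one mult_char_one[OF assms(1)] mult_char_power[OF assms(1)])
  qed
  then have "?P (LEAST k. ?P k)" by (rule LeastI)
  with assms(2) show ?thesis unfolding char_order_def by blast
qed

lemma char_pow_cong:
  fixes \<psi> :: "'a::{field,finite} \<Rightarrow> complex"
  assumes "mult_char \<psi>" "1 \<le> a" "1 \<le> b" "a mod char_order \<psi> = b mod char_order \<psi>"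
  shows "char_pow \<psi> a = char_pow \<psi> b"
proof
  fix x :: 'a
  show "char_pow \<psi> a x = char_pow \<psi> b x"
  proof (cases "x = 0")
    case True
    with assms show ?thesis unfolding char_pow_def mult_char_def by (simp add: power_0_left)
  next
    case False
    have "\<psi> x ^ c = \<psi> x ^ (c mod char_order \<psi>)" for c
    proof -
      have "\<psi> x ^ c = (\<psi> x ^ char_order \<psi>) ^ (c div char_order \<psi>) * \<psi> x ^ (c mod char_order \<psi>)"
        by (simp only: power_mult[symmetric] power_add[symmetric] mult_div_mod_eq)
      then show ?thesis by (simp add: mult_char_pow_order[OF assms(1) False])
    qed
    with assms(4) show ?thesis unfolding char_pow_def by metis
  qed
qed

context
  fixes p s :: nat
  assumes card_eq: "CARD('a::{field,finite}) = p ^ s"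
begin

lemma frobenius_inj: "inj (\<lambda>x::'a. x ^ p)"
proof (rule injI)
  fix x y :: 'a
  assume eq: "x ^ p = y ^ p"
  have "s \<noteq> 0" using card_field_ge_2[where 'a='a] card_eq by (cases s) auto
  then have "p ^ s = p * p ^ (s - 1)" by (cases s) auto
  then have "z = (z ^ p) ^ (p ^ (s - 1))" for z :: 'a
    using field_power_card[of z] card_eq by (simp add: power_mult)
  then show "x = y" using eq by metis
qed

lemma trace_nat_frobenius: "trace_nat p s ((x::'a) ^ p) = trace_nat p s x"
proof -
  have "trace_Fq p s (x ^ p) = (\<Sum>i<s. x ^ (p ^ Suc i))"
    unfolding trace_Fq_def by (simp add: power_mult[symmetric] mult.commute)
  also have "\<dots> = (\<Sum>i<s. x ^ (p ^ i))"
    using sum.lessThan_Suc_shift[of "\<lambda>i. x ^ (p ^ i)" s] field_power_card[of x] card_eq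
    by (simp add: add.commute)
  finally show ?thesis unfolding trace_nat_def trace_Fq_def by simp
qed

lemma gauss_sum_char_pow_mult:
  assumes "mult_char (\<psi> :: 'a \<Rightarrow> complex)"
  shows "gauss_sum p s (char_pow \<psi> (p * j)) = gauss_sum p s (char_pow \<psi> j)"
proof -
  let ?f = "\<lambda>x::'a. \<psi> x ^ j * zeta p ^ trace_nat p s x"
  have "gauss_sum p s (char_pow \<psi> j) = sum ?f ((\<lambda>x. x ^ p) ` UNIV)"
    using finite_UNIV_inj_surj[OF _ frobenius_inj]
    unfolding gauss_sum_def char_pow_def by simp
  also have "\<dots> = sum (?f \<circ> (\<lambda>x. x ^ p)) UNIV"
    by (rule sum.reindex[OF frobenius_inj])
  also have "\<dots> = gauss_sum p s (char_pow \<psi> (p * j))"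
    unfolding gauss_sum_def char_pow_def
    by (auto intro!: sum.cong simp: mult_char_power[OF assms] trace_nat_frobenius power_mult)
  finally show ?thesis ..
qed

end

lemma odd_mod_two_power_iff: "0 < r \<Longrightarrow> odd (x mod 2 ^ r) \<longleftrightarrow> odd (x::nat)"
  using even_mod_exp_div_exp_iff[of x r 0] by simp

definition odds_upto :: "nat \<Rightarrow> nat set" where
  "odds_upto N = {c. 1 \<le> c \<and> c \<le> N \<and> odd c}"

lemma finite_odds_upto [simp]: "finite (odds_upto N)"
  unfolding odds_upto_def by (rule finite_subset[of _ "{..N}"]) auto

lemma odds_upto_small: "odds_upto (Suc 0) = {1}" "odds_upto 2 = {1}" "odds_upto 4 = {1, 3}"
    "odds_upto 8 = {1, 3, 5, 7}"
  unfolding odds_upto_def set_eq_iff by (simp_all, presburger+)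

lemma sum_by_two_adic_valuation:
  "(\<Sum>j=1..2^m-1. f j) = (\<Sum>r=1..m. \<Sum>j\<in>odds_upto (2^r-1). f (2^(m-r) * j))"
proof (induction m arbitrary: f)
  case (Suc m)
  let ?E = "(*) 2 ` {1..2^m-1}"
  have split: "{1..2^Suc m - 1} = odds_upto (2^Suc m - 1) \<union> ?E"
  proof (intro set_eqI iffI)
    fix x :: nat assume x: "x \<in> {1..2^Suc m - 1}"
    show "x \<in> odds_upto (2^Suc m - 1) \<union> ?E"
    proof (cases "odd x")
      case False
      then obtain k where "x = 2 * k" by auto
      with x show ?thesis by auto
    qed (use x in \<open>auto simp: odds_upto_def\<close>)
  qed (auto simp: odds_upto_def)
  have "(\<Sum>j=1..2^Suc m - 1. f j) = (\<Sum>j\<in>odds_upto (2^Suc m - 1). f j) + (\<Sum>j\<in>?E. f j)"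
    unfolding split by (rule sum.union_disjoint) (auto simp: odds_upto_def)
  also have "(\<Sum>j\<in>?E. f j) = (\<Sum>k=1..2^m-1. f (2 * k))"
    by (simp add: sum.reindex inj_on_def)
  also have "\<dots> = (\<Sum>r=1..m. \<Sum>j\<in>odds_upto (2^r-1). f (2^(Suc m - r) * j))"
    unfolding Suc.IH by (intro sum.cong) (auto simp: Suc_diff_le mult.assoc)
  finally show ?case by (simp add: add.commute)
qed simp

lemma sum_odds_upto_mult_odd:
  assumes "odd u"
  shows "(\<Sum>j\<in>odds_upto (2^r-1). F j) = (\<Sum>j\<in>odds_upto (2^r-1). F (u * j mod 2^r))"
proof (cases "r = 0")
  case False
  let ?h = "\<lambda>j. u * j mod 2^r"
  have inj: "inj_on ?h (odds_upto (2^r-1))"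
  proof (rule inj_onI)
    fix x y assume "x \<in> odds_upto (2^r-1)" "y \<in> odds_upto (2^r-1)" "?h x = ?h y"
    moreover have "coprime u (2^r)" using assms by simp
    ultimately show "x = y"
      using cong_mult_lcancel_nat[of u "2^r" x y] by (auto simp: cong_def odds_upto_def)
  qed
  have "?h j \<in> odds_upto (2^r-1)" if "j \<in> odds_upto (2^r-1)" for j
  proof -
    have "odd (?h j)" using that assms False by (simp add: odds_upto_def odd_mod_two_power_iff)
    moreover have "?h j < 2^r" by simp
    then have "?h j \<le> 2^r - 1" by linarith
    ultimately show ?thesis using odd_pos[of "?h j"] unfolding odds_upto_def by simp
  qed
  then have "?h ` odds_upto (2^r-1) \<subseteq> odds_upto (2^r-1)" by blast
  then have "?h ` odds_upto (2^r-1) = odds_upto (2^r-1)"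
    by (rule endo_inj_surj[OF finite_odds_upto _ inj])
  then have "(\<Sum>j\<in>odds_upto (2^r-1). F j) = (\<Sum>j\<in>?h ` odds_upto (2^r-1). F j)" by simp
  also have "\<dots> = (\<Sum>j\<in>odds_upto (2^r-1). F (?h j))" by (simp only: sum.reindex[OF inj] comp_def)
  finally show ?thesis .
qed (simp add: odds_upto_def)

lemma odds_upto_double:
  assumes "1 \<le> M"
  shows "odds_upto (2^Suc M) = odds_upto (2^M) \<union> (\<lambda>c. c + 2^M) ` odds_upto (2^M)"
proof (intro set_eqI iffI)
  fix c assume c: "c \<in> odds_upto (2^Suc M)"
  show "c \<in> odds_upto (2^M) \<union> (\<lambda>c. c + 2^M) ` odds_upto (2^M)"
  proof (cases "c \<le> 2^M")
    case False
    then have "c - 2^M \<in> odds_upto (2^M)"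
      using c assms by (auto simp: odds_upto_def)
    moreover have "c = c - 2^M + 2^M" using False by simp
    ultimately show ?thesis by blast
  qed (use c in \<open>auto simp: odds_upto_def\<close>)
qed (use assms in \<open>auto simp: odds_upto_def\<close>)

lemma sum_odds_upto_periodic:
  fixes f :: "nat \<Rightarrow> 'a::comm_semiring_1"
  assumes "1 \<le> d" "d \<le> M" and periodic: "\<And>c. odd c \<Longrightarrow> f c = f (c mod 2^d)"
  shows "(\<Sum>c\<in>odds_upto (2^M). f c) = 2^(M-d) * (\<Sum>c\<in>odds_upto (2^d). f c)"
  using assms(2)
proof (induction M rule: dec_induct)
  case (step M)
  have shift: "f (c + 2^M) = f c" if "c \<in> odds_upto (2^M)" for c
  proof -
    obtain k where k: "(2::nat)^M = 2^d * k" using le_imp_power_dvd[OF step.hyps(1)] by blast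
    have "odd c" "odd (c + 2^M)" using that assms(1) step.hyps(1) by (auto simp: odds_upto_def)
    then have "f (c + 2^M) = f ((c + 2^d * k) mod 2^d)" using periodic k by simp
    also have "\<dots> = f c" using periodic \<open>odd c\<close> by simp
    finally show ?thesis .
  qed
  have "odds_upto (2^M) \<inter> (\<lambda>c. c + 2^M) ` odds_upto (2^M) = {}"
    by (auto simp: odds_upto_def)
  then have "(\<Sum>c\<in>odds_upto (2^Suc M). f c)
      = (\<Sum>c\<in>odds_upto (2^M). f c) + (\<Sum>c\<in>(\<lambda>c. c + 2^M) ` odds_upto (2^M). f c)"
    unfolding odds_upto_double[OF order_trans[OF assms(1) step.hyps(1)]]
    by (intro sum.union_disjoint) auto
  also have "(\<Sum>c\<in>(\<lambda>c. c + 2^M) ` odds_upto (2^M). f c) = (\<Sum>c\<in>odds_upto (2^M). f (c + 2^M))"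
    by (simp add: sum.reindex)
  also have "(\<Sum>c\<in>odds_upto (2^M). f (c + 2^M)) = (\<Sum>c\<in>odds_upto (2^M). f c)"
    using shift by (rule sum.cong[OF refl])
  finally show ?case using step.IH step.hyps(1) by (simp add: Suc_diff_le mult.assoc flip: mult_2)
qed simp

lemma two_power_one_plus_odd_power:
  fixes w :: nat
  assumes "odd w" "2 \<le> a"
  shows "\<exists>w'. odd w' \<and> (1 + 2^a * w) ^ (2^k) = 1 + 2^(a+k) * w'"
proof (induction k)
  case (Suc k)
  then obtain v where "odd v" and v: "(1 + 2^a * w) ^ (2^k) = 1 + 2^(a+k) * v" by blast
  define b where "b = a + k - 2"
  have "a + k = b + 2" using assms(2) unfolding b_def by simp
  then have e: "(2::nat)^(a+k) = 4 * 2^b" "(2::nat)^(a + Suc k) = 8 * 2^b"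
    by (simp_all add: power_add)
  have "(1 + 2^a * w) ^ (2^Suc k) = ((1 + 2^a * w) ^ (2^k))^2"
    by (simp only: power_Suc2 power_mult)
  also have "\<dots> = (1 + 2^(a+k) * v)^2" by (simp only: v)
  also have "\<dots> = 1 + 2^(a + Suc k) * (v + 2^Suc b * v^2)"
    unfolding e by (simp add: power2_eq_square algebra_simps)
  finally have "(1 + 2^a * w) ^ (2^Suc k) = 1 + 2^(a + Suc k) * (v + 2^Suc b * v^2)" .
  moreover have "odd (v + 2^Suc b * v^2)" using \<open>odd v\<close> by simp
  ultimately show ?case by blast
qed (use assms(1) in auto)

text \<open>
  With \<open>G j\<close> standing for the Gauss sum of \<open>\<lambda>\<^sup>j\<close>, \<open>twisted_part G m r t c\<close> is \<open>W\<^sub>r\<^sub>,\<^sub>t(c)\<close>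
  and \<open>twisted_sum G m t c\<close> is the inner sum of \<open>S\<^sub>t\<close>.
\<close>

definition twisted_part :: "(nat \<Rightarrow> complex) \<Rightarrow> nat \<Rightarrow> nat \<Rightarrow> nat \<Rightarrow> nat \<Rightarrow> complex" where
  "twisted_part G m r t c =
     (\<Sum>j\<in>odds_upto (2^r - 1). G (2^(m-r) * j) * zeta (2^(m-t)) ^ (2^(m-r) * c * j))"

definition twisted_sum :: "(nat \<Rightarrow> complex) \<Rightarrow> nat \<Rightarrow> nat \<Rightarrow> nat \<Rightarrow> complex" where
  "twisted_sum G m t c = (\<Sum>j=1..2^m-1. G j * zeta (2^(m-t)) ^ (c * j))"

lemma twisted_sum_eq_sum_parts: "twisted_sum G m t c = (\<Sum>r=1..m. twisted_part G m r t c)"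
  unfolding twisted_sum_def twisted_part_def sum_by_two_adic_valuation by (simp add: ac_simps)

lemma twisted_part_cong:
  assumes "r \<le> m" "t \<le> m" "c mod 2^(r-t) = c' mod 2^(r-t)"
  shows "twisted_part G m r t c = twisted_part G m r t c'"
proof -
  have "(2^(m-r) * c * j) mod 2^(m-t) = (2^(m-r) * c' * j) mod 2^(m-t)" for j :: nat
  proof (cases "t \<le> r")
    case True
    then have N: "(2::nat)^(m-t) = 2^(m-r) * 2^(r-t)" using assms by (simp flip: power_add)
    have "c * j mod 2^(r-t) = c' * j mod 2^(r-t)"
      using mod_mult_left_eq[of c "2^(r-t)" j] mod_mult_left_eq[of c' "2^(r-t)" j] assms(3) by simp
    then show ?thesis unfolding N by (simp add: mult.assoc mod_mult_mult1)
  next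
    case False
    then have "(2::nat)^(m-r) = 2^(m-t) * 2^(t-r)" using assms by (simp flip: power_add)
    then show ?thesis by (simp add: mult.assoc)
  qed
  then have "zeta (2^(m-t)) ^ (2^(m-r) * c * j) = zeta (2^(m-t)) ^ (2^(m-r) * c' * j)" for j
    by (rule zeta_pow_cong)
  then show ?thesis unfolding twisted_part_def by simp
qed

lemma twisted_part_odd_low:
  assumes "r \<le> t + 1" "r \<le> m" "t \<le> m" "odd c"
  shows "twisted_part G m r t c = twisted_part G m r t 1"
proof (rule twisted_part_cong)
  have "r - t = 0 \<or> r - t = 1" using assms(1) by linarith
  then show "c mod 2^(r-t) = 1 mod 2^(r-t)" using assms(4) by (auto simp: odd_iff_mod_2_eq_one)
qed (use assms in auto)

lemma twisted_part_add_half: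
  assumes "t < r" "r \<le> m" "odd w"
  shows "twisted_part G m r t (c + 2^(r-t-1) * w) = - twisted_part G m r t c"
  unfolding twisted_part_def sum_negf[symmetric]
proof (rule sum.cong[OF refl])
  fix j assume "j \<in> odds_upto (2^r - 1)"
  then have "odd j" by (simp add: odds_upto_def)
  have "m - t = Suc (m - t - 1)" using assms by simp
  then have N: "(2::nat)^(m-t) = 2 * 2^(m-t-1)" by (metis power_Suc)
  have "(2::nat)^(m-r) * 2^(r-t-1) = 2^(m-t-1)" using assms by (simp flip: power_add)
  then have "2^(m-r) * (c + 2^(r-t-1) * w) * j = 2^(m-r) * c * j + 2^(m-t-1) * (w * j)"
    by (simp add: algebra_simps)
  then have "zeta (2^(m-t)) ^ (2^(m-r) * (c + 2^(r-t-1) * w) * j) = - (zeta (2^(m-t)) ^ (2^(m-r) * c * j))"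
    unfolding N using \<open>odd j\<close> assms(3) by (simp add: zeta_pow_add_half_odd)
  then show "G (2^(m-r) * j) * zeta (2^(m-t)) ^ (2^(m-r) * (c + 2^(r-t-1) * w) * j) =
        - (G (2^(m-r) * j) * zeta (2^(m-t)) ^ (2^(m-r) * c * j))" by simp
qed

lemma twisted_part_zero_indep: "twisted_part G m r t 0 = twisted_part G m r t' 0"
  by (simp add: twisted_part_def)

lemma twisted_sum_odd_split:
  assumes "t < m" "odd c"
  shows "twisted_sum G m t c
       = (\<Sum>r=1..t+1. twisted_part G m r t 1) + (\<Sum>r=t+2..m. twisted_part G m r t c)"
proof -
  have "{1..m} = {1..t+1} \<union> {t+2..m}" using assms(1) by auto
  then have "twisted_sum G m t c
      = (\<Sum>r=1..t+1. twisted_part G m r t c) + (\<Sum>r=t+2..m. twisted_part G m r t c)"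
    unfolding twisted_sum_eq_sum_parts by (simp add: sum.union_disjoint)
  also have "(\<Sum>r=1..t+1. twisted_part G m r t c) = (\<Sum>r=1..t+1. twisted_part G m r t 1)"
    using assms by (intro sum.cong refl twisted_part_odd_low) auto
  finally show ?thesis .
qed

definition twisted_power_sum :: "(nat \<Rightarrow> complex) \<Rightarrow> nat \<Rightarrow> nat \<Rightarrow> nat \<Rightarrow> complex" where
  "twisted_power_sum G m n t = (\<Sum>c\<in>odds_upto (2^(m-t)). twisted_sum G m t c ^ n)"

lemma twisted_power_sum_top:
  assumes "1 \<le> m"
  shows "twisted_power_sum G m n (m-1) + twisted_power_sum G m n m =
           ((\<Sum>r=1..m-1. twisted_part G m r m 1) + twisted_part G m m m 1)^n
         + ((\<Sum>r=1..m-1. twisted_part G m r m 1) - twisted_part G m m m 1)^n"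
proof -
  define X where "X = (\<Sum>r=1..m-1. twisted_part G m r m 1)"
  define Y where "Y = twisted_part G m m m 1"
  have "{1..m} = insert m {1..m-1}" using assms by auto
  then have split: "(\<Sum>r=1..m. f r) = f m + (\<Sum>r=1..m-1. f r)" for f :: "nat \<Rightarrow> complex"
    using assms by simp
  have low: "twisted_part G m r (m-1) 1 = twisted_part G m r m 1" if "r \<le> m - 1" for r
    using that twisted_part_cong[of r m "m-1" 1 0 G] twisted_part_cong[of r m m 1 0 G]
      twisted_part_zero_indep[of G m r "m-1" m] by simp
  have "twisted_part G m m (m-1) (0 + 2^(m-(m-1)-1) * 1) = - twisted_part G m m (m-1) 0"
    using assms by (intro twisted_part_add_half) auto
  then have high: "twisted_part G m m (m-1) 1 = - Y"
    using assms twisted_part_cong[of m m m 1 0 G] twisted_part_zero_indep[of G m m "m-1" m]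
    unfolding Y_def by simp
  have "(\<Sum>r=1..m-1. twisted_part G m r (m-1) 1) = X"
    unfolding X_def by (intro sum.cong refl low) auto
  then have "twisted_sum G m (m-1) 1 = X - Y"
    unfolding twisted_sum_eq_sum_parts split using high by simp
  moreover have "twisted_sum G m m 1 = X + Y"
    unfolding twisted_sum_eq_sum_parts split X_def Y_def by simp
  moreover have "m - (m-1) = 1" using assms by simp
  ultimately show ?thesis
    unfolding twisted_power_sum_def X_def[symmetric] Y_def[symmetric] by (simp add: odds_upto_small)
qed

lemma twisted_power_sum_single_part:
  assumes "1 \<le> d" "t + d \<le> m"
    and split: "\<And>c. odd c \<Longrightarrow> twisted_sum G m t c = X + twisted_part G m (t+d) t c"
  shows "twisted_power_sum G m n t
       = 2^(m-t-d) * (\<Sum>c\<in>odds_upto (2^d). (X + twisted_part G m (t+d) t c)^n)"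
proof -
  have "twisted_power_sum G m n t = (\<Sum>c\<in>odds_upto (2^(m-t)). (X + twisted_part G m (t+d) t c)^n)"
    unfolding twisted_power_sum_def by (intro sum.cong refl) (simp add: odds_upto_def split)
  also have "\<dots> = 2^(m-t-d) * (\<Sum>c\<in>odds_upto (2^d). (X + twisted_part G m (t+d) t c)^n)"
  proof (rule sum_odds_upto_periodic)
    fix c :: nat
    have "twisted_part G m (t+d) t c = twisted_part G m (t+d) t (c mod 2^d)"
      using assms(2) by (intro twisted_part_cong) auto
    then show "(X + twisted_part G m (t+d) t c)^n = (X + twisted_part G m (t+d) t (c mod 2^d))^n"
      by simp
  qed (use assms in auto)
  finally show ?thesis by (simp add: diff_diff_add)
qed

locale frobenius_invariant =
  fixes G :: "nat \<Rightarrow> complex" and p m :: nat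
  assumes odd_p: "odd p"
    and G_mult_p: "\<And>j. G (p * j) = G j"
    and G_cong: "\<And>a b. 1 \<le> a \<Longrightarrow> 1 \<le> b \<Longrightarrow> a mod 2^m = b mod 2^m \<Longrightarrow> G a = G b"
begin

lemma G_mult_p_power: "G (p^K * j) = G j"
  by (induction K) (simp_all add: mult.assoc G_mult_p)

lemma G_two_power_mult_p_power_mod:
  assumes "r \<le> m" "0 < r" "odd j"
  shows "G (2^(m-r) * (p^K * j mod 2^r)) = G (2^(m-r) * j)"
proof -
  have "odd (p^K)" using odd_p by simp
  have "(2::nat)^m = 2^(m-r) * 2^r" using assms(1) by (simp flip: power_add)
  then have red: "2^(m-r) * (p^K * j mod 2^r) = 2^(m-r) * p^K * j mod 2^m"
    by (simp add: mod_mult_mult1 mult.assoc)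
  have "odd (p^K * j mod 2^r)"
    using assms(2,3) \<open>odd (p^K)\<close> by (simp add: odd_mod_two_power_iff)
  then have "1 \<le> 2^(m-r) * (p^K * j mod 2^r)" using odd_pos by (simp add: Suc_le_eq)
  moreover have "1 \<le> 2^(m-r) * p^K * j"
    using odd_pos[OF assms(3)] odd_pos[OF \<open>odd (p^K)\<close>] by (simp add: Suc_le_eq)
  ultimately have "G (2^(m-r) * (p^K * j mod 2^r)) = G (2^(m-r) * p^K * j)"
    using red by (intro G_cong) simp_all
  also have "\<dots> = G (2^(m-r) * j)"
    using G_mult_p_power[of K "2^(m-r) * j"] by (simp add: ac_simps)
  finally show ?thesis .
qed

lemma twisted_part_mult_p_power:
  assumes "r \<le> m" "t \<le> m"
  shows "twisted_part G m r t (p^K * c) = twisted_part G m r t c"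
proof -
  let ?u = "p^K"
  have "odd ?u" using odd_p by simp
  have M: "(2::nat)^m = 2^(m-r) * 2^r" using assms by (simp flip: power_add)
  have "twisted_part G m r t c
      = (\<Sum>j\<in>odds_upto (2^r-1). G (2^(m-r) * (?u * j mod 2^r))
          * zeta (2^(m-t)) ^ (2^(m-r) * c * (?u * j mod 2^r)))"
    unfolding twisted_part_def by (rule sum_odds_upto_mult_odd[OF \<open>odd ?u\<close>])
  also have "\<dots> = twisted_part G m r t (?u * c)"
    unfolding twisted_part_def
  proof (rule sum.cong[OF refl])
    fix j assume j: "j \<in> odds_upto (2^r-1)"
    then have "odd j" "0 < r" by (cases r; simp add: odds_upto_def)+
    have "2^(m-r) * c * (?u * j mod 2^r) mod 2^m = c * (2^(m-r) * (?u * j mod 2^r)) mod 2^m"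
      by (simp add: ac_simps)
    also have "\<dots> = c * (2^(m-r) * ?u * j mod 2^m) mod 2^m"
      unfolding M by (simp add: mod_mult_mult1 mult.assoc)
    also have "\<dots> = 2^(m-r) * (?u * c) * j mod 2^m"
      by (simp add: mod_mult_right_eq ac_simps)
    finally have "zeta (2^(m-t)) ^ (2^(m-r) * c * (?u * j mod 2^r))
                = zeta (2^(m-t)) ^ (2^(m-r) * (?u * c) * j)"
      by (rule zeta_pow_cong_dvd[rotated]) (simp add: le_imp_power_dvd)
    then show "G (2^(m-r) * (?u * j mod 2^r)) * zeta (2^(m-t)) ^ (2^(m-r) * c * (?u * j mod 2^r))
        = G (2^(m-r) * j) * zeta (2^(m-t)) ^ (2^(m-r) * (?u * c) * j)"
      using G_two_power_mult_p_power_mod[OF assms(1) \<open>0 < r\<close> \<open>odd j\<close>] by simp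
  qed
  finally show ?thesis ..
qed

lemma twisted_part_vanish:
  assumes "t < r" "r \<le> m" "odd c" "p^K = 1 + 2^(r-t-1) * w" "odd w"
  shows "twisted_part G m r t c = 0"
proof -
  have "twisted_part G m r t c = twisted_part G m r t (p^K * c)"
    using twisted_part_mult_p_power assms(1,2) by simp
  also have "p^K * c = c + 2^(r-t-1) * (w * c)" using assms(4) by (simp add: algebra_simps)
  also have "twisted_part G m r t \<dots> = - twisted_part G m r t c"
    using assms by (intro twisted_part_add_half) auto
  finally show ?thesis by simp
qed

lemma twisted_part_vanish_above:
  assumes "p^K = 1 + 2^a * w" "odd w" "2 \<le> a" "t + a < r" "r \<le> m" "odd c"
  shows "twisted_part G m r t c = 0"
proof -
  obtain w' where "odd w'" and w': "(1 + 2^a * w) ^ (2^(r-t-1-a)) = 1 + 2^(a + (r-t-1-a)) * w'"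
    using two_power_one_plus_odd_power[OF assms(2,3)] by blast
  have "p ^ (K * 2^(r-t-1-a)) = 1 + 2^(r-t-1) * w'"
    using w' assms(1,4) by (simp add: power_mult)
  moreover have "t < r" using assms(4) by linarith
  ultimately show ?thesis using twisted_part_vanish assms(5,6) \<open>odd w'\<close> by blast
qed



lemma twisted_part_vanish_3_mod_8:
  assumes "p mod 8 = 3" "r = t + 2 \<or> t + 4 \<le> r" "r \<le> m" "odd c"
  shows "twisted_part G m r t c = 0"
proof -
  define a where "a = p div 8"
  have p: "p = 8 * a + 3" using div_mult_mod_eq[of p 8] assms(1) unfolding a_def by simp
  from assms(2) show ?thesis
  proof
    assume r: "r = t + 2"
    have eq: "p ^ 1 = 1 + 2^(r-t-1) * (4 * a + 1)" using r p by simp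
    have "t < r" using r by simp
    from twisted_part_vanish[OF this assms(3,4) eq] show ?thesis by simp
  next
    assume "t + 4 \<le> r"
    have "p ^ 2 = 1 + 2^3 * (8 * a^2 + 6 * a + 1)"
      unfolding p by (simp add: power2_eq_square algebra_simps)
    from twisted_part_vanish_above[OF this _ _ _ assms(3,4)] \<open>t + 4 \<le> r\<close> show ?thesis
      by simp
  qed
qed

lemma twisted_part_vanish_5_mod_8:
  assumes "p mod 8 = 5" "t + 3 \<le> r" "r \<le> m" "odd c"
  shows "twisted_part G m r t c = 0"
proof -
  define a where "a = p div 8"
  have "p ^ 1 = 1 + 2^2 * (2 * a + 1)"
    using div_mult_mod_eq[of p 8] assms(1) unfolding a_def by simp
  from twisted_part_vanish_above[OF this _ _ _ assms(3,4)] assms(2) show ?thesis by simp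
qed

lemma twisted_power_sum_3_mod_8_top:
  assumes "p mod 8 = 3" "3 \<le> m"
  shows "twisted_power_sum G m n (m-2) = 2 * (\<Sum>r=1..m-1. twisted_part G m r (m-2) 1)^n"
proof -
  have "twisted_sum G m (m-2) c = (\<Sum>r=1..m-1. twisted_part G m r (m-2) 1)" if "odd c" for c
  proof -
    have "twisted_part G m m (m-2) c = 0"
      using assms that by (intro twisted_part_vanish_3_mod_8) auto
    moreover have "m - 2 + 1 = m - 1" "m - 2 + 2 = m" using assms(2) by auto
    ultimately show ?thesis using twisted_sum_odd_split[OF _ that, of "m-2" m G] assms(2) by simp
  qed
  moreover have "m - (m - 2) = 2" using assms(2) by simp
  ultimately show ?thesis unfolding twisted_power_sum_def by (simp add: odds_upto_small)
qed

lemma twisted_power_sum_3_mod_8: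
  assumes "p mod 8 = 3" "t + 3 \<le> m"
  shows "twisted_power_sum G m n t = 2^(m-t-2) *
           (((\<Sum>r=1..t+1. twisted_part G m r t 1) + twisted_part G m (t+3) t 1)^n
          + ((\<Sum>r=1..t+1. twisted_part G m r t 1) - twisted_part G m (t+3) t 1)^n)"
proof -
  define X where "X = (\<Sum>r=1..t+1. twisted_part G m r t 1)"
  define W where "W = twisted_part G m (t+3) t"
  have "twisted_sum G m t c = X + W c" if "odd c" for c
  proof -
    have "(\<Sum>r=t+2..m. twisted_part G m r t c) = (\<Sum>r\<in>{t+3}. twisted_part G m r t c)"
      using assms that by (intro sum.mono_neutral_right ballI twisted_part_vanish_3_mod_8) auto
    then show ?thesis
      using twisted_sum_odd_split[OF _ that, of t m G] assms(2) unfolding X_def W_def by simp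
  qed
  then have "twisted_power_sum G m n t = 2^(m-t-3) * (\<Sum>c\<in>odds_upto 8. (X + W c)^n)"
    using twisted_power_sum_single_part[of 3 t m G X n] assms(2) unfolding W_def by simp
  moreover have W3: "W 3 = W 1"
  proof -
    have "W 3 = W (p^1 * 1)" unfolding W_def using assms by (intro twisted_part_cong) auto
    then show ?thesis unfolding W_def using twisted_part_mult_p_power[of "t+3" t 1 1] assms(2)
      by simp
  qed
  moreover have "W 5 = - W 1" "W 7 = - W 1"
  proof -
    have e: "(1::nat) + 2^(t+3-t-1) * 1 = 5" "(3::nat) + 2^(t+3-t-1) * 1 = 7" by simp_all
    show "W 5 = - W 1" "W 7 = - W 1"
      using twisted_part_add_half[of t "t+3" m 1 G 1] twisted_part_add_half[of t "t+3" m 1 G 3]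
        assms(2) W3 unfolding e W_def by simp_all
  qed
  moreover have "(2::complex)^(m-t-2) = 2 * 2^(m-t-3)"
  proof -
    have "m - t - 2 = Suc (m - t - 3)" using assms(2) by simp
    then show ?thesis by (simp only: power_Suc)
  qed
  ultimately show ?thesis unfolding X_def[symmetric] W_def[symmetric]
    by (simp add: odds_upto_small algebra_simps)
qed

lemma twisted_power_sum_5_mod_8:
  assumes "p mod 8 = 5" "t + 2 \<le> m"
  shows "twisted_power_sum G m n t = 2^(m-t-2) *
           (((\<Sum>r=1..t+1. twisted_part G m r t 1) + twisted_part G m (t+2) t 1)^n
          + ((\<Sum>r=1..t+1. twisted_part G m r t 1) - twisted_part G m (t+2) t 1)^n)"
proof -
  define X where "X = (\<Sum>r=1..t+1. twisted_part G m r t 1)"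
  define W where "W = twisted_part G m (t+2) t"
  have "twisted_sum G m t c = X + W c" if "odd c" for c
  proof -
    have "(\<Sum>r=t+2..m. twisted_part G m r t c) = (\<Sum>r\<in>{t+2}. twisted_part G m r t c)"
      using assms that by (intro sum.mono_neutral_right ballI twisted_part_vanish_5_mod_8) auto
    then show ?thesis
      using twisted_sum_odd_split[OF _ that, of t m G] assms(2) unfolding X_def W_def by simp
  qed
  then have "twisted_power_sum G m n t = 2^(m-t-2) * (\<Sum>c\<in>odds_upto 4. (X + W c)^n)"
    using twisted_power_sum_single_part[of 2 t m G X n] assms(2) unfolding W_def by simp
  moreover have "W 3 = - W 1"
  proof -
    have e: "(1::nat) + 2^(t+2-t-1) * 1 = 3" by simp
    show ?thesis using twisted_part_add_half[of t "t+2" m 1 G 1] assms(2) unfolding e W_def by simp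
  qed
  ultimately show ?thesis unfolding X_def[symmetric] W_def[symmetric]
    by (simp add: odds_upto_small)
qed

end

lemma frobenius_invariant_gauss_sums:
  fixes \<psi> :: "'a::{field,finite} \<Rightarrow> complex"
  assumes "odd p" "CARD('a) = p ^ s" "mult_char \<psi>" "char_order \<psi> = 2 ^ m"
  shows "frobenius_invariant (\<lambda>j. gauss_sum p s (char_pow \<psi> j)) p m"
proof
  show "gauss_sum p s (char_pow \<psi> (p * j)) = gauss_sum p s (char_pow \<psi> j)" for j
    by (rule gauss_sum_char_pow_mult[OF assms(2,3)])
  show "gauss_sum p s (char_pow \<psi> a) = gauss_sum p s (char_pow \<psi> b)"
    if "1 \<le> a" "1 \<le> b" "a mod 2^m = b mod 2^m" for a b
    using char_pow_cong[OF assms(3) that(1,2)] that(3) assms(4) by simp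
qed (fact assms(1))

theorem corollary1:
  fixes lam :: "'a::{field,finite} \<Rightarrow> complex"
    and p s m n :: nat
  assumes hp: "prime p"
    and hp8: "p mod 8 = 3 \<or> p mod 8 = 5"
    and hq: "CARD('a) = p ^ s"
    and hdvd: "2 ^ m dvd (p ^ s - 1)"
    and hm3: "p mod 8 = 3 \<Longrightarrow> m \<ge> 3"
    and hm5: "p mod 8 = 5 \<Longrightarrow> m \<ge> 2"
    and hchar: "mult_char lam"
    and hord: "char_order lam = 2 ^ m"
    and hn: "n \<ge> 1"
  shows "(S_sum p s lam m n (m - 1) + S_sum p s lam m n m =
           ((\<Sum>r=1..m-1. W_sum p s lam m r m 1) + W_sum p s lam m m m 1) ^ n
         + ((\<Sum>r=1..m-1. W_sum p s lam m r m 1) - W_sum p s lam m m m 1) ^ n)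
     \<and> (p mod 8 = 3 \<longrightarrow>
           S_sum p s lam m n (m - 2) = 2 * (\<Sum>r=1..m-1. W_sum p s lam m r (m - 2) 1) ^ n)
     \<and> (\<forall>t. p mod 8 = 3 \<longrightarrow> t \<le> m - 3 \<longrightarrow>
           S_sum p s lam m n t = 2 ^ (m - t - 2) *
             (((\<Sum>r=1..t+1. W_sum p s lam m r t 1) + W_sum p s lam m (t+3) t 1) ^ n
            + ((\<Sum>r=1..t+1. W_sum p s lam m r t 1) - W_sum p s lam m (t+3) t 1) ^ n))
     \<and> (\<forall>t. p mod 8 = 5 \<longrightarrow> t \<le> m - 2 \<longrightarrow>
           S_sum p s lam m n t = 2 ^ (m - t - 2) *
             (((\<Sum>r=1..t+1. W_sum p s lam m r t 1) + W_sum p s lam m (t+2) t 1) ^ n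
            + ((\<Sum>r=1..t+1. W_sum p s lam m r t 1) - W_sum p s lam m (t+2) t 1) ^ n))"
proof -
  define G where "G = (\<lambda>j. gauss_sum p s (char_pow lam j))"
  have "p mod 2 = p mod 8 mod 2" by (simp add: mod_mod_cancel)
  then have "odd p" using hp8 by (auto simp: odd_iff_mod_2_eq_one)
  interpret frobenius_invariant G p m
    unfolding G_def by (rule frobenius_invariant_gauss_sums[OF \<open>odd p\<close> hq hchar hord])
  have S: "S_sum p s lam m n t = twisted_power_sum G m n t" for t
    unfolding S_sum_def twisted_power_sum_def twisted_sum_def odds_upto_def G_def ..
  have W: "W_sum p s lam m r t c = twisted_part G m r t c" for r t c
    unfolding W_sum_def twisted_part_def odds_upto_def G_def ..
  have "2 \<le> m" using hp8 hm3 hm5 by auto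
  show ?thesis unfolding S W
    by (intro conjI allI impI twisted_power_sum_top twisted_power_sum_3_mod_8_top
        twisted_power_sum_3_mod_8 twisted_power_sum_5_mod_8) (use \<open>2 \<le> m\<close> hm3 in auto)
qed

end
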